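(* Let $X$ be a Banach space as described in the context. There exists a function $f\in X$ which is not a polynomial and for which there is a sequence $p_n\in\mathcal{P}_n[\mathbb{Z}]$ with $\lim_{n\to\infty}\|f-p_n\|=0$ if and only if $\liminf_{n\to\infty}\|z^n\|=0$.
   Context: $\mathbb{D}=\{z\in\mathbb{C}:|z|<1\}$. $X$ is a complex Banach space of functions analytic in $\mathbb{D}$ whose norm $\|\cdot\|$ satisfies: (i) $\|f(\cdot\, e^{it})\|=\|f(\cdot)\|$ for all $t\in\mathbb{R}$ and $f\in X$; (ii) $\|f\|<\infty$ for every entire function $f$; (iii) for all $f\in X$ and $g\in L[0,2\pi]$, $\big\|\frac{1}{2\pi}\int_0^{2\pi} f(ze^{it})g(t)\,dt\big\|\le \frac{1}{2\pi}\int_0^{2\pi}|g(t)|\,dt\cdot\|f\|$. $\|z^n\|$ is the norm in $X$ of $z\mapsto z^n$. A complex number is called an integer if its real and imaginary parts are integers; $\mathcal{P}_n[\mathbb{Z}]$ is the set of complex polynomials of degree at most $n-1$ with integer coefficients in this sense. *)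

theory Defs
  imports "HOL-Analysis.Analysis" "HOL-Computational_Algebra.Polynomial"
begin

text \<open>Functions on the unit disc are represented as functions on the whole plane
  that vanish outside the open unit disc (so equality of functions is equality on D).\<close>

definition restrD :: "(complex \<Rightarrow> complex) \<Rightarrow> complex \<Rightarrow> complex" where
  "restrD f = (\<lambda>z. if z \<in> ball 0 1 then f z else 0)"

definition cinteger :: "complex \<Rightarrow> bool" where
  "cinteger c \<longleftrightarrow> Re c \<in> \<int> \<and> Im c \<in> \<int>"

text \<open>P_n[Z]: polynomials of degree at most n-1 with complex-integer coefficients
  (for n = 0 this is just the zero polynomial).\<close>
definition Pn_Z :: "nat \<Rightarrow> complex poly set" where
  "Pn_Z n = {p. (\<forall>i. cinteger (coeff p i)) \<and> (p = 0 \<or> degree p < n)}"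

definition admissible_space :: "(complex \<Rightarrow> complex) set \<Rightarrow> ((complex \<Rightarrow> complex) \<Rightarrow> real) \<Rightarrow> bool" where
  "admissible_space X N \<longleftrightarrow>
     \<comment> \<open>functions analytic in D (vanishing outside D)\<close>
     (\<forall>f\<in>X. f holomorphic_on ball 0 1 \<and> (\<forall>z. z \<notin> ball 0 1 \<longrightarrow> f z = 0)) \<and>
     \<comment> \<open>complex vector space\<close>
     ((\<lambda>z. 0) \<in> X) \<and> (\<forall>f\<in>X. \<forall>g\<in>X. (\<lambda>z. f z + g z) \<in> X) \<and> (\<forall>f\<in>X. \<forall>c::complex. (\<lambda>z. c * f z) \<in> X) \<and>
     \<comment> \<open>norm\<close>
     (\<forall>f\<in>X. N f \<ge> 0) \<and> (\<forall>f\<in>X. N f = 0 \<longleftrightarrow> f = (\<lambda>z. 0)) \<and>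
     (\<forall>f\<in>X. \<forall>c::complex. N (\<lambda>z. c * f z) = norm c * N f) \<and>
     (\<forall>f\<in>X. \<forall>g\<in>X. N (\<lambda>z. f z + g z) \<le> N f + N g) \<and>
     \<comment> \<open>completeness\<close>
     (\<forall>F. (\<forall>n. F n \<in> X) \<longrightarrow> (\<forall>e>0. \<exists>M. \<forall>m\<ge>M. \<forall>n\<ge>M. N (\<lambda>z. F m z - F n z) < e) \<longrightarrow>
          (\<exists>f\<in>X. (\<lambda>n. N (\<lambda>z. F n z - f z)) \<longlonglongrightarrow> 0)) \<and>
     \<comment> \<open>(i) rotation invariance\<close>
     (\<forall>f\<in>X. \<forall>t::real. (\<lambda>z. f (z * exp (\<i> * t))) \<in> X \<and> N (\<lambda>z. f (z * exp (\<i> * t))) = N f) \<and>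
     \<comment> \<open>(ii) every entire function belongs to X\<close>
     (\<forall>f. f holomorphic_on UNIV \<longrightarrow> restrD f \<in> X) \<and>
     \<comment> \<open>(iii) convolution with L^1 functions\<close>
     (\<forall>f\<in>X. \<forall>g::real \<Rightarrow> complex. g absolutely_integrable_on {0..2*pi} \<longrightarrow>
        (let h = (\<lambda>z. (1 / (2*pi)) * integral {0..2*pi} (\<lambda>t. f (z * exp (\<i> * t)) * g t)) in
          h \<in> X \<and> N h \<le> (1 / (2*pi)) * integral {0..2*pi} (\<lambda>t. norm (g t)) * N f))"

end

theory Submission
  imports Defs "HOL-Complex_Analysis.Complex_Analysis"
begin

text \<open>
  Convolving f with the kernel e^(-ikt) as in (iii) yields its k-th Taylor term c_k z^k, so
  |c_k(f)| * ||z^k|| \<le> ||f||: Taylor coefficients depend continuously on f.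
  If a non-polynomial f is the limit of p_n in P_n[Z], its coefficients are therefore Gaussian
  integers, infinitely many of them nonzero, and for such a k \<ge> n
  ||z^k|| \<le> |c_k(f) - c_k(p_n)| * ||z^k|| \<le> ||f - p_n||, which tends to 0.
  Conversely, if ||z^(m_k)|| < 2^(-k) along a subsequence, the series f = \<Sum>k z^(m_k)
  converges absolutely in X; f is not a polynomial, and its truncations below degree n lie
  in P_n[Z] and converge to f.
\<close>

lemma integral_exp_int_multiple:
  fixes m :: int
  shows "integral {0..2*pi} (\<lambda>t. exp (\<i> * of_real t * of_int m)) = (if m = 0 then 2*pi else 0)"
proof (cases "m = 0")
  case True
  then show ?thesis by (simp add: scaleR_conv_of_real)
next
  case False
  define a where "a = \<i> * of_int m"
  have "a \<noteq> 0" using False by (simp add: a_def)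
  then have "((\<lambda>t. exp (a * of_real t) / a) has_vector_derivative exp (a * of_real t)) (at t within {0..2*pi})"
    for t by (intro derivative_eq_intros has_complex_derivative_imp_has_vector_derivative [unfolded o_def] | simp)+
  then have "((\<lambda>t. exp (a * of_real t)) has_integral exp (a * of_real (2*pi)) / a - exp (a * of_real 0) / a) {0..2*pi}"
    by (intro fundamental_theorem_of_calculus) auto
  moreover have "exp (a * of_real (2*pi)) = 1"
    using exp_integer_2pi[of "2 * of_int m"] by (simp add: a_def algebra_simps)
  ultimately have "((\<lambda>t. exp (a * of_real t)) has_integral 0) {0..2*pi}" by simp
  then show ?thesis using False by (simp add: a_def integral_unique mult.commute mult.left_commute)
qed

lemma integral_suminf_Weierstrass:
  fixes u :: "nat \<Rightarrow> real \<Rightarrow> 'a::banach"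
  assumes cont: "\<And>j. continuous_on {a..b} (u j)"
    and bound: "\<And>j t. t \<in> {a..b} \<Longrightarrow> norm (u j t) \<le> M j" and "summable M"
  shows "integral {a..b} (\<lambda>t. \<Sum>j. u j t) = (\<Sum>j. integral {a..b} (u j))"
proof -
  have "uniform_limit {a..b} (\<lambda>n t. \<Sum>j<n. u j t) (\<lambda>t. \<Sum>j. u j t) sequentially"
    using bound \<open>summable M\<close> by (intro Weierstrass_m_test) auto
  then obtain I J where I: "\<And>n. ((\<lambda>t. \<Sum>j<n. u j t) has_integral I n) {a..b}"
    and J: "((\<lambda>t. \<Sum>j. u j t) has_integral J) {a..b}" and "I \<longlonglongrightarrow> J"
    by (rule uniform_limit_integral) (auto intro!: continuous_intros cont)
  have "I = (\<lambda>n. \<Sum>j<n. integral {a..b} (u j))"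
  proof
    fix n
    have "I n = integral {a..b} (\<lambda>t. \<Sum>j<n. u j t)"
      using I[of n] by (rule integral_unique [symmetric])
    also have "\<dots> = (\<Sum>j<n. integral {a..b} (u j))"
      by (rule integral_sum) (auto intro: integrable_continuous_interval cont)
    finally show "I n = (\<Sum>j<n. integral {a..b} (u j))" .
  qed
  with \<open>I \<longlonglongrightarrow> J\<close> have "(\<lambda>j. integral {a..b} (u j)) sums J"
    by (simp add: sums_def)
  with J show ?thesis by (simp add: integral_unique sums_iff)
qed

lemma integral_eval_fps_rotated:
  fixes F :: "complex fps"
  assumes z: "ereal (norm z) < fps_conv_radius F"
  shows "integral {0..2*pi} (\<lambda>t. eval_fps F (z * exp (\<i> * of_real t)) * exp (- (\<i> * of_real t * of_nat k)))
       = 2*pi * (fps_nth F k * z ^ k)"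
proof -
  define u where "u = (\<lambda>j t. fps_nth F j * z ^ j * exp (\<i> * of_real t * of_int (int j - int k)))"
  have expand_term: "fps_nth F j * (z * exp (\<i> * of_real t)) ^ j * exp (- (\<i> * of_real t * of_nat k)) = u j t" for j t
  proof -
    have "(z * exp (\<i> * of_real t)) ^ j * exp (- (\<i> * of_real t * of_nat k))
        = z ^ j * exp (of_nat j * (\<i> * of_real t) - \<i> * of_real t * of_nat k)"
      by (simp add: power_mult_distrib exp_diff exp_of_nat_mult [symmetric] divide_inverse exp_minus)
    also have "of_nat j * (\<i> * of_real t) - \<i> * of_real t * of_nat k = \<i> * of_real t * of_int (int j - int k)"
      by (simp add: algebra_simps)
    finally show ?thesis by (simp add: u_def)
  qed
  have "eval_fps F (z * exp (\<i> * of_real t)) * exp (- (\<i> * of_real t * of_nat k)) = (\<Sum>j. u j t)" for t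
  proof -
    have "norm (z * exp (\<i> * of_real t)) = norm z" by (simp add: norm_mult)
    then have "(\<lambda>j. fps_nth F j * (z * exp (\<i> * of_real t)) ^ j) sums eval_fps F (z * exp (\<i> * of_real t))"
      using z by (intro sums_eval_fps) auto
    from sums_mult2[OF this, of "exp (- (\<i> * of_real t * of_nat k))"]
    have "(\<lambda>j. u j t) sums (eval_fps F (z * exp (\<i> * of_real t)) * exp (- (\<i> * of_real t * of_nat k)))"
      by (simp only: expand_term)
    then show ?thesis by (simp add: sums_iff)
  qed
  then have "integral {0..2*pi} (\<lambda>t. eval_fps F (z * exp (\<i> * of_real t)) * exp (- (\<i> * of_real t * of_nat k)))
      = (\<Sum>j. integral {0..2*pi} (u j))"
    using norm_summable_fps[OF z]
    by (simp, intro integral_suminf_Weierstrass[where M = "\<lambda>j. norm (fps_nth F j * z ^ j)"])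
       (auto simp: u_def norm_mult intro!: continuous_intros)
  also have "\<dots> = 2*pi * (fps_nth F k * z ^ k)"
  proof -
    have "integral {0..2*pi} (u j) = (if j = k then 2*pi * (fps_nth F k * z ^ k) else 0)" for j
      using integral_exp_int_multiple[of "int j - int k"] by (auto simp: u_def scaleR_conv_of_real)
    then show ?thesis using sums_single[of k "\<lambda>_. 2*pi * (fps_nth F k * z ^ k)"] by (simp add: sums_iff)
  qed
  finally show ?thesis .
qed

abbreviation taylor_coeff :: "(complex \<Rightarrow> complex) \<Rightarrow> nat \<Rightarrow> complex" where
  "taylor_coeff f k \<equiv> fps_nth (fps_expansion f 0) k"

lemma fps_expansion_restrD_poly: "fps_expansion (restrD (poly q)) 0 = fps_of_poly q"
proof -
  have "\<forall>\<^sub>F w in nhds 0. restrD (poly q) w = poly q w"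
    using eventually_nhds_in_open[of "ball 0 1" 0] by (auto simp: restrD_def elim: eventually_mono)
  then have "fps_expansion (restrD (poly q)) 0 = fps_expansion (poly q) 0"
    by (rule fps_expansion_cong)
  also have "\<dots> = fps_of_poly q"
  proof (rule fps_expansion_eqI)
    have "eval_fps (fps_of_poly q) = poly q" by (rule ext) simp
    then show "poly q has_fps_expansion fps_of_poly q"
      using eval_fps_has_fps_expansion[of "fps_of_poly q"] by simp
  qed
  finally show ?thesis .
qed

lemma
  assumes "f holomorphic_on ball 0 1"
  shows taylor_coeff_sums: "norm z < 1 \<Longrightarrow> (\<lambda>j. taylor_coeff f j * z ^ j) sums f z"
    and fps_expansion_conv_radius_disc: "fps_conv_radius (fps_expansion f 0) \<ge> 1"
    and eval_fps_expansion_disc: "norm z < 1 \<Longrightarrow> eval_fps (fps_expansion f 0) z = f z"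
  using assms holomorphic_power_series[OF assms, of z] conv_radius_fps_expansion[of f 0 1]
    eval_fps_expansion'[of f 0 1 z] by (simp_all add: fps_expansion_def one_ereal_def)

lemma fps_expansion_diff_disc:
  assumes "f holomorphic_on ball 0 1" "g holomorphic_on ball 0 1"
  shows "fps_expansion (\<lambda>z. f z - g z) 0 = fps_expansion f 0 - fps_expansion g 0"
  using assms by (intro fps_expansion_eqI has_fps_expansion_diff has_fps_expansion_fps_expansion) auto

lemma eq_restrD_poly_if_taylor_coeff_eventually_0:
  assumes hol: "f holomorphic_on ball 0 1" and out: "\<And>z. z \<notin> ball 0 1 \<Longrightarrow> f z = 0"
    and vanish: "\<And>k. k \<ge> n \<Longrightarrow> taylor_coeff f k = 0"
  shows "f = restrD (poly (\<Sum>k<n. monom (taylor_coeff f k) k))"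
proof
  fix z
  show "f z = restrD (poly (\<Sum>k<n. monom (taylor_coeff f k) k)) z"
  proof (cases "z \<in> ball 0 1")
    case True
    have "(\<lambda>j. taylor_coeff f j * z ^ j) sums (\<Sum>j<n. taylor_coeff f j * z ^ j)"
      by (rule sums_finite) (auto simp: vanish)
    with taylor_coeff_sums[OF hol, of z] True have "f z = (\<Sum>j<n. taylor_coeff f j * z ^ j)"
      by (simp add: sums_unique2)
    with True show ?thesis by (simp add: restrD_def poly_sum poly_monom)
  qed (simp add: out restrD_def)
qed

lemma cinteger_norm_ge_1:
  assumes "cinteger c" "c \<noteq> 0"
  shows "norm c \<ge> 1"
proof -
  consider "Re c \<noteq> 0" | "Im c \<noteq> 0" using \<open>c \<noteq> 0\<close> complex_eqI by force
  then show ?thesis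
  proof cases
    case 1
    then have "1 \<le> \<bar>Re c\<bar>" using assms by (intro Ints_nonzero_abs_ge1) (auto simp: cinteger_def)
    then show ?thesis using abs_Re_le_cmod[of c] by linarith
  next
    case 2
    then have "1 \<le> \<bar>Im c\<bar>" using assms by (intro Ints_nonzero_abs_ge1) (auto simp: cinteger_def)
    then show ?thesis using abs_Im_le_cmod[of c] by linarith
  qed
qed

lemma cinteger_limit:
  assumes "c \<longlonglongrightarrow> l" "\<And>n. cinteger (c n)"
  shows "cinteger l"
proof -
  have "Re l \<in> \<int>" "Im l \<in> \<int>"
    using assms by (auto simp: cinteger_def intro!: Lim_in_closed_set[OF closed_Ints] tendsto_Re tendsto_Im)
  then show ?thesis by (simp add: cinteger_def)
qed

lemma sum_monom_in_Pn_Z: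
  assumes "\<And>j. j < n \<Longrightarrow> cinteger (c j)"
  shows "(\<Sum>j<n. monom (c j) j) \<in> Pn_Z n"
proof -
  have "cinteger (coeff (\<Sum>j<n. monom (c j) j) i)" for i
    using assms by (simp add: coeff_sum coeff_monom cinteger_def)
  moreover have "degree (\<Sum>j<n. monom (c j) j) \<le> n - 1"
    by (intro degree_sum_le) (auto intro: order.trans[OF degree_monom_le])
  ultimately show ?thesis by (cases "n = 0") (auto simp: Pn_Z_def)
qed

lemma liminf_ereal_eq_0_iff_frequently_less:
  fixes a :: "nat \<Rightarrow> real"
  assumes nonneg: "\<And>n. a n \<ge> 0"
  shows "liminf (\<lambda>n. ereal (a n)) = 0 \<longleftrightarrow> (\<forall>e>0. \<exists>\<^sub>F n in sequentially. a n < e)"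
proof
  assume liminf: "liminf (\<lambda>n. ereal (a n)) = 0"
  show "\<forall>e>0. \<exists>\<^sub>F n in sequentially. a n < e"
  proof (intro allI impI, rule ccontr)
    fix e :: real
    assume "e > 0" and "\<not> (\<exists>\<^sub>F n in sequentially. a n < e)"
    then have "\<forall>\<^sub>F n in sequentially. ereal e \<le> ereal (a n)"
      by (simp add: not_frequently not_less)
    then have "ereal e \<le> liminf (\<lambda>n. ereal (a n))" by (rule Liminf_bounded)
    with liminf \<open>e > 0\<close> show False by simp
  qed
next
  assume small: "\<forall>e>0. \<exists>\<^sub>F n in sequentially. a n < e"
  have "liminf (\<lambda>n. ereal (a n)) \<le> 0 + ereal e" if "e > 0" for e
  proof (rule ccontr)
    assume contra: "\<not> liminf (\<lambda>n. ereal (a n)) \<le> 0 + ereal e"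
    have "ereal (e/2) < ereal e" using \<open>e > 0\<close> by simp
    also have "ereal e < liminf (\<lambda>n. ereal (a n))" using contra by simp
    finally have "ereal (e/2) < liminf (\<lambda>n. ereal (a n))" .
    moreover have "\<forall>y < liminf (\<lambda>n. ereal (a n)). \<forall>\<^sub>F n in sequentially. y < ereal (a n)"
      using le_Liminf_iff[of "liminf (\<lambda>n. ereal (a n))" sequentially "\<lambda>n. ereal (a n)"] by simp
    ultimately have "\<forall>\<^sub>F n in sequentially. ereal (e/2) < ereal (a n)" by blast
    then have "\<forall>\<^sub>F n in sequentially. \<not> a n < e/2" by (rule eventually_mono) simp
    moreover have "\<exists>\<^sub>F n in sequentially. a n < e/2" using small \<open>e > 0\<close> half_gt_zero by blast
    ultimately show False
      unfolding frequently_def by blast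
  qed
  then have "liminf (\<lambda>n. ereal (a n)) \<le> 0" by (rule ereal_le_epsilon2)
  moreover have "0 \<le> liminf (\<lambda>n. ereal (a n))" using nonneg by (intro Liminf_bounded) simp
  ultimately show "liminf (\<lambda>n. ereal (a n)) = 0" by simp
qed

lemma strict_mono_geometrically_small:
  fixes a :: "nat \<Rightarrow> real"
  assumes "\<forall>e>0. \<exists>\<^sub>F n in sequentially. a n < e"
  obtains m where "strict_mono m" "\<And>k. a (m k) < (1/2) ^ k"
proof -
  have choose: "\<exists>n > M. a n < (1/2) ^ k" for M k
  proof -
    have "\<exists>\<^sub>F n in sequentially. a n < (1/2) ^ k" using assms by simp
    then obtain n where "n \<ge> Suc M" "a n < (1/2) ^ k" unfolding frequently_sequentially by blast
    then show ?thesis by (intro exI[of _ n]) auto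
  qed
  obtain m where "\<forall>k. a (m k) < (1/2) ^ k \<and> m k < m (Suc k)"
    using dependent_nat_choice[of "\<lambda>k n. a n < (1/2) ^ k" "\<lambda>_ n n'. n < n'"] choose by blast
  then show ?thesis using that strict_mono_Suc_iff by blast
qed

locale admissible =
  fixes X :: "(complex \<Rightarrow> complex) set" and N :: "(complex \<Rightarrow> complex) \<Rightarrow> real"
  assumes admissible_space: "admissible_space X N"
begin

lemma mem_holomorphic: "f \<in> X \<Longrightarrow> f holomorphic_on ball 0 1"
  using admissible_space by (simp add: admissible_space_def)

lemma mem_vanishes_outside: "f \<in> X \<Longrightarrow> z \<notin> ball 0 1 \<Longrightarrow> f z = 0"
  using admissible_space by (simp add: admissible_space_def)

lemma zero_mem: "(\<lambda>z. 0) \<in> X"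
  using admissible_space by (simp add: admissible_space_def)

lemma add_mem: "f \<in> X \<Longrightarrow> g \<in> X \<Longrightarrow> (\<lambda>z. f z + g z) \<in> X"
  using admissible_space by (simp add: admissible_space_def)

lemma cmult_mem: "f \<in> X \<Longrightarrow> (\<lambda>z. c * f z) \<in> X"
  using admissible_space by (simp add: admissible_space_def)

lemma N_nonneg: "f \<in> X \<Longrightarrow> N f \<ge> 0"
  using admissible_space by (simp add: admissible_space_def)

lemma N_eq_0_iff: "f \<in> X \<Longrightarrow> N f = 0 \<longleftrightarrow> f = (\<lambda>z. 0)"
  using admissible_space by (simp add: admissible_space_def)

lemma N_cmult: "f \<in> X \<Longrightarrow> N (\<lambda>z. c * f z) = norm c * N f"
  using admissible_space by (simp add: admissible_space_def)

lemma N_triangle: "f \<in> X \<Longrightarrow> g \<in> X \<Longrightarrow> N (\<lambda>z. f z + g z) \<le> N f + N g"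
  using admissible_space by (simp add: admissible_space_def)

lemma complete:
  "(\<And>n. F n \<in> X) \<Longrightarrow> (\<forall>e>0. \<exists>M. \<forall>m\<ge>M. \<forall>n\<ge>M. N (\<lambda>z. F m z - F n z) < e) \<Longrightarrow>
     \<exists>f\<in>X. (\<lambda>n. N (\<lambda>z. F n z - f z)) \<longlonglongrightarrow> 0"
  using admissible_space by (simp add: admissible_space_def)

lemma restrD_entire_mem: "f holomorphic_on UNIV \<Longrightarrow> restrD f \<in> X"
  using admissible_space by (simp add: admissible_space_def)

lemma N_convolution_le:
  fixes g :: "real \<Rightarrow> complex"
  assumes "f \<in> X" "g absolutely_integrable_on {0..2*pi}"
  shows "N (\<lambda>z. (1 / (2*pi)) * integral {0..2*pi} (\<lambda>t. f (z * exp (\<i> * of_real t)) * g t))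
           \<le> (1 / (2*pi)) * integral {0..2*pi} (\<lambda>t. norm (g t)) * N f"
  using admissible_space assms by (simp add: admissible_space_def Let_def)

lemma diff_mem: "f \<in> X \<Longrightarrow> g \<in> X \<Longrightarrow> (\<lambda>z. f z - g z) \<in> X"
  using add_mem[of f "\<lambda>z. (-1) * g z"] cmult_mem[of g "-1"] by simp

lemma N_minus_commute: "f \<in> X \<Longrightarrow> g \<in> X \<Longrightarrow> N (\<lambda>z. f z - g z) = N (\<lambda>z. g z - f z)"
  using N_cmult[of "\<lambda>z. g z - f z" "-1", OF diff_mem] by simp

lemma restrD_poly_mem: "restrD (poly q) \<in> X"
  by (rule restrD_entire_mem) (auto intro!: holomorphic_intros)

lemma restrD_power_mem: "restrD (\<lambda>z. z ^ k) \<in> X"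
  by (rule restrD_entire_mem) (auto intro!: holomorphic_intros)

lemma N_restrD_power_pos: "N (restrD (\<lambda>z. z ^ k)) > 0"
proof -
  have "restrD (\<lambda>z. z ^ k) (1/2) \<noteq> 0" by (simp add: restrD_def)
  then have "restrD (\<lambda>z. z ^ k) \<noteq> (\<lambda>z. 0)" by metis
  then show ?thesis
    using N_eq_0_iff[OF restrD_power_mem] N_nonneg[OF restrD_power_mem] by (auto simp: less_le)
qed

lemma sum_mem: "finite A \<Longrightarrow> (\<And>k. k \<in> A \<Longrightarrow> F k \<in> X) \<Longrightarrow> (\<lambda>z. \<Sum>k\<in>A. F k z) \<in> X"
  by (induction A rule: finite_induct) (auto intro: zero_mem add_mem)

lemma N_sum_le:
  "finite A \<Longrightarrow> (\<And>k. k \<in> A \<Longrightarrow> F k \<in> X) \<Longrightarrow> N (\<lambda>z. \<Sum>k\<in>A. F k z) \<le> (\<Sum>k\<in>A. N (F k))"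
proof (induction A rule: finite_induct)
  case empty
  then show ?case using N_eq_0_iff[OF zero_mem] by simp
next
  case (insert a A)
  then have "N (\<lambda>z. F a z + (\<Sum>k\<in>A. F k z)) \<le> N (F a) + N (\<lambda>z. \<Sum>k\<in>A. F k z)"
    by (intro N_triangle sum_mem) auto
  with insert show ?case by simp
qed

lemma summable_N_imp_convergent:
  assumes mem: "\<And>j. F j \<in> X" and summable: "summable (\<lambda>j. N (F j))"
  obtains f where "f \<in> X" "(\<lambda>n. N (\<lambda>z. f z - (\<Sum>j<n. F j z))) \<longlonglongrightarrow> 0"
proof -
  define S where "S n = (\<lambda>z. \<Sum>j<n. F j z)" for n
  have S_mem: "S n \<in> X" for n
    unfolding S_def by (intro sum_mem mem) auto
  have S_diff: "N (\<lambda>z. S n z - S m z) \<le> (\<Sum>j\<in>{m..<n}. N (F j))" if "m \<le> n" for m n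
  proof -
    have "(\<lambda>z. S n z - S m z) = (\<lambda>z. \<Sum>j\<in>{m..<n}. F j z)"
      using that by (simp add: S_def atLeast0LessThan [symmetric] sum_diff_nat_ivl)
    then show ?thesis by (simp add: N_sum_le mem)
  qed
  have "\<forall>e>0. \<exists>M. \<forall>m\<ge>M. \<forall>n\<ge>M. N (\<lambda>z. S m z - S n z) < e"
  proof (intro allI impI)
    fix e :: real
    assume "e > 0"
    obtain M where M: "\<And>m n. m \<ge> M \<Longrightarrow> norm (\<Sum>j\<in>{m..<n}. N (F j)) < e"
      using summable \<open>e > 0\<close> unfolding summable_Cauchy by blast
    have "N (\<lambda>z. S m z - S n z) < e" if "m \<ge> M" "n \<ge> M" for m n
    proof (cases "n \<le> m")
      case True
      then show ?thesis using S_diff[OF True] M[OF that(2), of m] by simp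
    next
      case False
      then show ?thesis
        using S_diff[of m n] M[OF that(1), of n] N_minus_commute[OF S_mem S_mem, of m n] by simp
    qed
    then show "\<exists>M. \<forall>m\<ge>M. \<forall>n\<ge>M. N (\<lambda>z. S m z - S n z) < e" by blast
  qed
  then obtain f where "f \<in> X" "(\<lambda>n. N (\<lambda>z. S n z - f z)) \<longlonglongrightarrow> 0"
    using complete[of S, OF S_mem] by blast
  with that show ?thesis
    using N_minus_commute[OF S_mem] by (simp add: S_def)
qed

lemma norm_taylor_coeff_le:
  assumes f: "f \<in> X"
  shows "norm (taylor_coeff f k) * N (restrD (\<lambda>z. z ^ k)) \<le> N f"
proof -
  define g where "g t = exp (- (\<i> * of_real t * of_nat k))" for t :: real
  define h where "h z = (1 / (2*pi)) * integral {0..2*pi} (\<lambda>t. f (z * exp (\<i> * of_real t)) * g t)" for z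
  have g_integrable: "g absolutely_integrable_on {0..2*pi}"
    unfolding g_def by (intro absolutely_integrable_continuous_real continuous_intros)
  have "h = (\<lambda>z. taylor_coeff f k * restrD (\<lambda>z. z ^ k) z)"
  proof
    fix z
    show "h z = taylor_coeff f k * restrD (\<lambda>z. z ^ k) z"
    proof (cases "z \<in> ball 0 1")
      case True
      then have "f (z * exp (\<i> * of_real t)) = eval_fps (fps_expansion f 0) (z * exp (\<i> * of_real t))" for t
        using eval_fps_expansion_disc[OF mem_holomorphic[OF f]] by (simp add: norm_mult)
      moreover have "ereal (norm z) < 1" using True by simp
      then have "ereal (norm z) < fps_conv_radius (fps_expansion f 0)"
        using fps_expansion_conv_radius_disc[OF mem_holomorphic[OF f]] by (rule less_le_trans)
      ultimately show ?thesis
        using True integral_eval_fps_rotated[of z "fps_expansion f 0" k] by (simp add: h_def g_def restrD_def)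
    next
      case False
      then have "f (z * exp (\<i> * of_real t)) = 0" for t
        by (intro mem_vanishes_outside[OF f]) (simp add: norm_mult)
      with False show ?thesis by (simp add: h_def restrD_def)
    qed
  qed
  then have "N h = norm (taylor_coeff f k) * N (restrD (\<lambda>z. z ^ k))"
    by (simp add: N_cmult restrD_power_mem)
  moreover have "N h \<le> N f"
    using N_convolution_le[OF f g_integrable] by (simp add: h_def[abs_def] g_def)
  ultimately show ?thesis by simp
qed

lemma norm_taylor_coeff_diff_le:
  assumes "f \<in> X" "g \<in> X"
  shows "norm (taylor_coeff f k - taylor_coeff g k) * N (restrD (\<lambda>z. z ^ k)) \<le> N (\<lambda>z. f z - g z)"
  using norm_taylor_coeff_le[OF diff_mem[OF assms], of k]
  by (simp add: fps_expansion_diff_disc mem_holomorphic assms)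

lemma taylor_coeff_tendsto:
  assumes f: "f \<in> X" and G: "\<And>n. G n \<in> X" and lim: "(\<lambda>n. N (\<lambda>z. f z - G n z)) \<longlonglongrightarrow> 0"
  shows "(\<lambda>n. taylor_coeff (G n) k) \<longlonglongrightarrow> taylor_coeff f k"
proof (rule LIM_zero_cancel, rule Lim_null_comparison)
  have "norm (taylor_coeff (G n) k - taylor_coeff f k) \<le> N (\<lambda>z. f z - G n z) / N (restrD (\<lambda>z. z ^ k))" for n
    using norm_taylor_coeff_diff_le[OF f G, of k n] N_restrD_power_pos[of k]
    by (simp add: pos_le_divide_eq norm_minus_commute)
  then show "\<forall>\<^sub>F n in sequentially. norm (taylor_coeff (G n) k - taylor_coeff f k)
      \<le> N (\<lambda>z. f z - G n z) / N (restrD (\<lambda>z. z ^ k))"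
    by simp
  show "(\<lambda>n. N (\<lambda>z. f z - G n z) / N (restrD (\<lambda>z. z ^ k))) \<longlonglongrightarrow> 0"
    using tendsto_divide_zero[OF lim] .
qed

lemma frequently_small_power_norm_if_integer_approximable:
  assumes f: "f \<in> X" and not_poly: "\<nexists>q. f = restrD (poly q)"
    and p: "\<And>n. p n \<in> Pn_Z n" and lim: "(\<lambda>n. N (\<lambda>z. f z - restrD (poly (p n)) z)) \<longlonglongrightarrow> 0"
  shows "\<forall>e>0. \<exists>\<^sub>F n in sequentially. N (restrD (\<lambda>z. z ^ n)) < e"
proof (intro allI impI)
  fix e :: real
  assume "e > 0"
  have coeff_lim: "(\<lambda>n. coeff (p n) k) \<longlonglongrightarrow> taylor_coeff f k" for k
    using taylor_coeff_tendsto[OF f restrD_poly_mem lim] by (simp add: fps_expansion_restrD_poly)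
  have integer: "cinteger (taylor_coeff f k)" for k
    using p by (intro cinteger_limit[OF coeff_lim]) (simp add: Pn_Z_def)
  have nonzero: "\<exists>k\<ge>n. taylor_coeff f k \<noteq> 0" for n
    using eq_restrD_poly_if_taylor_coeff_eventually_0[OF mem_holomorphic[OF f] mem_vanishes_outside[OF f]]
      not_poly by blast
  obtain n0 where n0: "\<And>n. n \<ge> n0 \<Longrightarrow> N (\<lambda>z. f z - restrD (poly (p n)) z) < e"
    using order_tendstoD(2)[OF lim \<open>e > 0\<close>] by (auto simp: eventually_sequentially)
  show "\<exists>\<^sub>F n in sequentially. N (restrD (\<lambda>z. z ^ n)) < e"
    unfolding frequently_sequentially
  proof
    fix M
    define n where "n = max n0 M"
    obtain k where "k \<ge> n" and k: "taylor_coeff f k \<noteq> 0"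
      using nonzero by blast
    have "p n = 0 \<or> degree (p n) < n" using p[of n] by (simp add: Pn_Z_def)
    then have "coeff (p n) k = 0" using \<open>k \<ge> n\<close> by (auto intro: coeff_eq_0)
    have "N (restrD (\<lambda>z. z ^ k)) \<le> norm (taylor_coeff f k) * N (restrD (\<lambda>z. z ^ k))"
      using cinteger_norm_ge_1[OF integer k] N_restrD_power_pos[of k] by simp
    also have "\<dots> = norm (taylor_coeff f k - taylor_coeff (restrD (poly (p n))) k) * N (restrD (\<lambda>z. z ^ k))"
      by (simp add: fps_expansion_restrD_poly \<open>coeff (p n) k = 0\<close>)
    also have "\<dots> \<le> N (\<lambda>z. f z - restrD (poly (p n)) z)"
      by (rule norm_taylor_coeff_diff_le[OF f restrD_poly_mem])
    also have "\<dots> < e" by (rule n0) (simp add: n_def)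
    finally show "\<exists>k\<ge>M. N (restrD (\<lambda>z. z ^ k)) < e"
      using \<open>k \<ge> n\<close> by (auto simp: n_def)
  qed
qed

lemma taylor_coeff_eq_if_truncations_converge:
  assumes f: "f \<in> X" and lim: "(\<lambda>n. N (\<lambda>z. f z - restrD (poly (\<Sum>j<n. monom (c j) j)) z)) \<longlonglongrightarrow> 0"
  shows "taylor_coeff f k = c k"
proof -
  have "\<forall>\<^sub>F n in sequentially. taylor_coeff (restrD (poly (\<Sum>j<n. monom (c j) j))) k = c k"
    unfolding eventually_sequentially
    by (intro exI[of _ "Suc k"]) (auto simp: fps_expansion_restrD_poly coeff_sum coeff_monom)
  then have "(\<lambda>n. taylor_coeff (restrD (poly (\<Sum>j<n. monom (c j) j))) k) \<longlonglongrightarrow> c k"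
    by (rule tendsto_eventually)
  with taylor_coeff_tendsto[OF f restrD_poly_mem lim] show ?thesis
    by (rule LIMSEQ_unique)
qed

lemma integer_approximable_nonpoly_if_frequently_small_power_norm:
  assumes small: "\<forall>e>0. \<exists>\<^sub>F n in sequentially. N (restrD (\<lambda>z. z ^ n)) < e"
  shows "\<exists>f\<in>X. (\<nexists>q. f = restrD (poly q)) \<and>
           (\<exists>p. (\<forall>n. p n \<in> Pn_Z n) \<and> (\<lambda>n. N (\<lambda>z. f z - restrD (poly (p n)) z)) \<longlonglongrightarrow> 0)"
proof -
  obtain m where m: "strict_mono m" and m_small: "\<And>k. N (restrD (\<lambda>z. z ^ m k)) < (1/2) ^ k"
    using strict_mono_geometrically_small[OF small] by blast
  define c where "c j = (if j \<in> range m then 1 else 0 :: complex)" for j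
  define F where "F j = (\<lambda>z. c j * restrD (\<lambda>z. z ^ j) z)" for j
  have F_mem: "F j \<in> X" for j
    unfolding F_def by (intro cmult_mem restrD_power_mem)
  have N_F: "N (F j) = norm (c j) * N (restrD (\<lambda>z. z ^ j))" for j
    unfolding F_def by (simp add: N_cmult restrD_power_mem)
  have "summable (\<lambda>k. N (F (m k)))"
    using m_small N_nonneg[OF restrD_power_mem]
    by (intro summable_comparison_test[OF _ summable_geometric[of "1/2"]]) (auto simp: N_F c_def less_imp_le)
  moreover have "N (F j) = 0" if "j \<notin> range m" for j
    using that by (simp add: N_F c_def)
  ultimately have "summable (\<lambda>j. N (F j))"
    using summable_mono_reindex[OF m, of "\<lambda>j. N (F j)"] by blast
  then obtain f where f: "f \<in> X" and lim_sums: "(\<lambda>n. N (\<lambda>z. f z - (\<Sum>j<n. F j z))) \<longlonglongrightarrow> 0"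
    using summable_N_imp_convergent F_mem by blast
  define p where "p n = (\<Sum>j<n. monom (c j) j)" for n
  have "restrD (poly (p n)) = (\<lambda>z. \<Sum>j<n. F j z)" for n
    by (auto simp: p_def F_def restrD_def poly_sum poly_monom fun_eq_iff)
  with lim_sums have lim: "(\<lambda>n. N (\<lambda>z. f z - restrD (poly (p n)) z)) \<longlonglongrightarrow> 0"
    by simp
  have p_mem: "p n \<in> Pn_Z n" for n
    unfolding p_def by (rule sum_monom_in_Pn_Z) (simp add: c_def cinteger_def)
  have coeff: "taylor_coeff f j = c j" for j
    using taylor_coeff_eq_if_truncations_converge[OF f lim[unfolded p_def]] .
  have "\<nexists>q. f = restrD (poly q)"
  proof
    assume "\<exists>q. f = restrD (poly q)"
    then obtain q where "f = restrD (poly q)" ..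
    moreover have "m (Suc (degree q)) > degree q"
      using seq_suble[OF m, of "Suc (degree q)"] by simp
    ultimately have "taylor_coeff f (m (Suc (degree q))) = 0"
      by (simp add: fps_expansion_restrD_poly coeff_eq_0)
    then show False by (simp add: coeff c_def)
  qed
  with f p_mem lim show ?thesis by blast
qed

end

theorem theorem5p5:
  fixes X :: "(complex \<Rightarrow> complex) set" and N :: "(complex \<Rightarrow> complex) \<Rightarrow> real"
  assumes "admissible_space X N"
  shows "(\<exists>f\<in>X. (\<nexists>q. f = restrD (poly q)) \<and>
            (\<exists>p. (\<forall>n. p n \<in> Pn_Z n) \<and> (\<lambda>n. N (\<lambda>z. f z - restrD (poly (p n)) z)) \<longlonglongrightarrow> 0))
         \<longleftrightarrow> liminf (\<lambda>n. ereal (N (restrD (\<lambda>z. z ^ n)))) = 0"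
proof -
  interpret admissible X N by (rule admissible.intro) (rule assms)
  have "liminf (\<lambda>n. ereal (N (restrD (\<lambda>z. z ^ n)))) = 0
      \<longleftrightarrow> (\<forall>e>0. \<exists>\<^sub>F n in sequentially. N (restrD (\<lambda>z. z ^ n)) < e)"
    using N_restrD_power_pos by (intro liminf_ereal_eq_0_iff_frequently_less less_imp_le)
  then show ?thesis
    using frequently_small_power_norm_if_integer_approximable
      integer_approximable_nonpoly_if_frequently_small_power_norm by blast
qed

end
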